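(* Fix a real number $\beta>-1$. If $\phi$ is a hyperbolic linear fractional self-map of $\mathbb{D}$, then the composition operator $C_\phi f=f\circ\phi$ is not complex symmetric on $A^2_\beta$.
   Context: $\mathbb{D}$ is the open unit disc and $\mathbb{T}$ the unit circle. For $\beta>-1$, $A^2_\beta$ is the Hilbert space of analytic functions $f(z)=\sum_{n\ge0}\widehat f(n)z^n$ on $\mathbb{D}$ with inner product $\langle f,g\rangle=\sum_{n\ge0}\frac{n!\,\Gamma(2+\beta)}{\Gamma(n+2+\beta)}\widehat f(n)\overline{\widehat g(n)}$ (equivalently the $L^2$ inner product with respect to $(\beta+1)(1-|z|^2)^\beta dA(z)$). A conjugation is a conjugate-linear map $C$ with $C^2=I$ and $\langle Cf,Cg\rangle=\langle g,f\rangle$; a bounded operator $T$ is complex symmetric if $CT=T^*C$ for some conjugation $C$. A linear fractional self-map of $\mathbb{D}$ is a map $\phi(z)=(az+b)/(cz+d)$ (with $ad-bc\neq0$) mapping $\mathbb{D}$ into $\mathbb{D}$. Following the paper, such a $\phi$ is called hyperbolic if it has an attractive fixed point $\omega\in\overline{\mathbb{D}}$ (the iterates $\phi^{[n]}$ converge to $\omega$ uniformly on compact subsets of $\mathbb{D}$) and its other fixed point lies outside $\mathbb{D}$; both fixed points lie on $\mathbb{T}$ exactly when $\phi$ is an automorphism. The paper separately calls parabolic those maps whose (unique) fixed point lies on $\mathbb{T}$, and loxodromic or elliptic those with one fixed point in $\mathbb{D}$ and the other outside $\overline{\mathbb{D}}$; these are not hyperbolic. *)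

theory Defs
  imports "HOL-Analysis.Analysis"
begin

definition taylor_coeff :: "(complex \<Rightarrow> complex) \<Rightarrow> nat \<Rightarrow> complex" where
  "taylor_coeff f n = (deriv ^^ n) f 0 / of_nat (fact n)"

definition bergman_weight :: "real \<Rightarrow> nat \<Rightarrow> real" where
  "bergman_weight \<beta> n = fact n * Gamma (2 + \<beta>) / Gamma (real n + 2 + \<beta>)"

text \<open>Normalisation convention: elements are taken to vanish outside the disc, so that
  equality of elements is equality of functions.\<close>
definition A2 :: "real \<Rightarrow> (complex \<Rightarrow> complex) set" where
  "A2 \<beta> = {f. f holomorphic_on ball 0 1 \<and> (\<forall>z. z \<notin> ball 0 1 \<longrightarrow> f z = 0) \<and>
              summable (\<lambda>n. bergman_weight \<beta> n * (norm (taylor_coeff f n))\<^sup>2)}"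

definition A2_inner :: "real \<Rightarrow> (complex \<Rightarrow> complex) \<Rightarrow> (complex \<Rightarrow> complex) \<Rightarrow> complex" where
  "A2_inner \<beta> f g = (\<Sum>n. complex_of_real (bergman_weight \<beta> n) * taylor_coeff f n * cnj (taylor_coeff g n))"

definition is_conjugation :: "real \<Rightarrow> ((complex \<Rightarrow> complex) \<Rightarrow> (complex \<Rightarrow> complex)) \<Rightarrow> bool" where
  "is_conjugation \<beta> C \<longleftrightarrow>
     (\<forall>f\<in>A2 \<beta>. C f \<in> A2 \<beta>) \<and>
     (\<forall>f\<in>A2 \<beta>. \<forall>g\<in>A2 \<beta>. C (\<lambda>z. f z + g z) = (\<lambda>z. C f z + C g z)) \<and>
     (\<forall>f\<in>A2 \<beta>. \<forall>a. C (\<lambda>z. a * f z) = (\<lambda>z. cnj a * C f z)) \<and>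
     (\<forall>f\<in>A2 \<beta>. C (C f) = f) \<and>
     (\<forall>f\<in>A2 \<beta>. \<forall>g\<in>A2 \<beta>. A2_inner \<beta> (C f) (C g) = A2_inner \<beta> g f)"

definition is_adjoint :: "real \<Rightarrow> ((complex \<Rightarrow> complex) \<Rightarrow> (complex \<Rightarrow> complex))
                          \<Rightarrow> ((complex \<Rightarrow> complex) \<Rightarrow> (complex \<Rightarrow> complex)) \<Rightarrow> bool" where
  "is_adjoint \<beta> T T' \<longleftrightarrow>
     (\<forall>f\<in>A2 \<beta>. T f \<in> A2 \<beta>) \<and> (\<forall>g\<in>A2 \<beta>. T' g \<in> A2 \<beta>) \<and>
     (\<forall>f\<in>A2 \<beta>. \<forall>g\<in>A2 \<beta>. A2_inner \<beta> (T f) g = A2_inner \<beta> f (T' g))"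

definition complex_symmetric :: "real \<Rightarrow> ((complex \<Rightarrow> complex) \<Rightarrow> (complex \<Rightarrow> complex)) \<Rightarrow> bool" where
  "complex_symmetric \<beta> T \<longleftrightarrow>
     (\<exists>C T'. is_conjugation \<beta> C \<and> is_adjoint \<beta> T T' \<and> (\<forall>f\<in>A2 \<beta>. C (T f) = T' (C f)))"

definition comp_op :: "(complex \<Rightarrow> complex) \<Rightarrow> (complex \<Rightarrow> complex) \<Rightarrow> (complex \<Rightarrow> complex)" where
  "comp_op \<phi> f = (\<lambda>z. if z \<in> ball 0 1 then f (\<phi> z) else 0)"

definition lf_selfmap_coeffs :: "(complex \<Rightarrow> complex) \<Rightarrow> complex \<Rightarrow> complex \<Rightarrow> complex \<Rightarrow> complex \<Rightarrow> bool" where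
  "lf_selfmap_coeffs \<phi> a b c d \<longleftrightarrow>
     a * d - b * c \<noteq> 0 \<and> (\<forall>z. \<phi> z = (a * z + b) / (c * z + d)) \<and>
     (\<forall>z\<in>ball 0 1. c * z + d \<noteq> 0 \<and> \<phi> z \<in> ball 0 1)"

text \<open>Hyperbolic: attractive (Denjoy--Wolff) fixed point omega on the unit circle, and a second
  fixed point (in the Riemann sphere: a finite one, or infinity when c = 0) outside the open disc.\<close>
definition hyperbolic_lf :: "(complex \<Rightarrow> complex) \<Rightarrow> bool" where
  "hyperbolic_lf \<phi> \<longleftrightarrow>
     (\<exists>a b c d \<omega>. lf_selfmap_coeffs \<phi> a b c d \<and>
        norm \<omega> = 1 \<and> c * \<omega> + d \<noteq> 0 \<and> \<phi> \<omega> = \<omega> \<and>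
        (\<forall>K. compact K \<and> K \<subseteq> ball 0 1 \<longrightarrow> uniform_limit K (\<lambda>n. \<phi> ^^ n) (\<lambda>_. \<omega>) sequentially) \<and>
        (c = 0 \<or> (\<exists>\<eta>. \<eta> \<noteq> \<omega> \<and> c * \<eta> + d \<noteq> 0 \<and> \<phi> \<eta> = \<eta> \<and> norm \<eta> \<ge> 1)))"

end

theory Submission
  imports Defs "HOL-Complex_Analysis.Complex_Analysis"
begin

text \<open>Suppose \<open>C\<^sub>\<phi>\<close> were complex symmetric with conjugation \<open>C\<close>. As \<open>C\<^sub>\<phi> 1 = 1\<close>, the function
  \<open>g = C 1 \<noteq> 0\<close> is fixed by the adjoint of \<open>C\<^sub>\<phi>\<close>, so \<open>\<langle>C\<^sub>\<phi>\<^sup>n z\<^sup>m, g\<rangle> = \<langle>z\<^sup>m, g\<rangle>\<close> for all \<open>n\<close>.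
  The iterates of a hyperbolic \<open>\<phi>\<close> converge locally uniformly to a point \<open>\<omega>\<close> of the unit
  circle. The functions \<open>(\<phi>\<^sup>n)\<^sup>m - \<omega>\<^sup>m\<close> are bounded by 2, so their Taylor coefficients stay in a
  ball of \<open>l\<^sup>2\<close> (the \<open>H\<^sup>2\<close> bound), and they tend to 0 coefficientwise; hence
  \<open>\<langle>C\<^sub>\<phi>\<^sup>n z\<^sup>m, g\<rangle> \<rightarrow> \<langle>\<omega>\<^sup>m, g\<rangle>\<close>. With weights \<open>w\<^sub>m\<close> and Taylor coefficients \<open>g\<^sub>m\<close> this says
  \<open>w\<^sub>m cnj g\<^sub>m = \<omega>\<^sup>m cnj g\<^sub>0\<close>, i.e. \<open>g\<close> is a multiple of the reproducing kernel at the boundary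
  point \<open>\<omega>\<close>. That kernel is not in \<open>A\<^sup>2\<^sub>\<beta>\<close>: since \<open>w\<^sub>m \<le> 1\<close>,
  \<open>|g\<^sub>0|\<^sup>2 \<le> w\<^sub>m |g\<^sub>m|\<^sup>2 \<rightarrow> 0\<close>. So \<open>g = 0\<close>, a contradiction.\<close>

lemma fact_mult_Gamma_le_Gamma:
  fixes \<beta> :: real
  assumes "\<beta> > -1"
  shows "fact n * Gamma (2 + \<beta>) \<le> Gamma (real n + 2 + \<beta>)"
proof (induction n)
  case (Suc n)
  have "real n + 2 + \<beta> \<notin> \<int>\<^sub>\<le>\<^sub>0"
    using assms nonpos_Ints_nonpos by force
  then have step: "Gamma (real (Suc n) + 2 + \<beta>) = (real n + 2 + \<beta>) * Gamma (real n + 2 + \<beta>)"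
    using Gamma_plus1[of "real n + 2 + \<beta>"] by (simp add: algebra_simps)
  have "0 < Gamma (2 + \<beta>)"
    using assms by (intro Gamma_real_pos) simp
  then have "fact (Suc n) * Gamma (2 + \<beta>) = (real n + 1) * (fact n * Gamma (2 + \<beta>))"
    by simp
  also have "\<dots> \<le> (real n + 2 + \<beta>) * Gamma (real n + 2 + \<beta>)"
    using Suc assms \<open>0 < Gamma (2 + \<beta>)\<close> by (intro mult_mono) auto
  finally show ?case
    unfolding step .
qed simp

lemma bergman_weight_pos: "\<beta> > -1 \<Longrightarrow> bergman_weight \<beta> n > 0"
  unfolding bergman_weight_def by (intro divide_pos_pos mult_pos_pos Gamma_real_pos) auto

lemma bergman_weight_le_1:
  assumes "\<beta> > -1"
  shows "bergman_weight \<beta> n \<le> 1"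
proof -
  have "Gamma (real n + 2 + \<beta>) > 0"
    using assms by (intro Gamma_real_pos) simp
  then show ?thesis
    unfolding bergman_weight_def using fact_mult_Gamma_le_Gamma[OF assms] by simp
qed

lemma bergman_weight_0:
  assumes "\<beta> > -1"
  shows "bergman_weight \<beta> 0 = 1"
proof -
  have "Gamma (2 + \<beta>) > 0"
    using assms by (intro Gamma_real_pos) simp
  then show ?thesis
    by (simp add: bergman_weight_def)
qed

lemma taylor_coeff_cong:
  assumes "r > 0" and "\<And>z. z \<in> ball 0 r \<Longrightarrow> f z = g z"
  shows "taylor_coeff f n = taylor_coeff g n"
proof -
  have "eventually (\<lambda>z. f z = g z) (nhds 0)"
    using eventually_nhds_in_open[of "ball 0 r" 0] assms by (auto elim: eventually_mono)
  then show ?thesis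
    unfolding taylor_coeff_def by (metis higher_deriv_cong_ev)
qed

lemma taylor_coeff_power: "taylor_coeff (\<lambda>z. z ^ m) k = (if k = m then 1 else 0)"
proof -
  have "(deriv ^^ k) (\<lambda>z. z ^ m) 0 = pochhammer (of_nat (Suc m - k)) k * (0::complex) ^ (m - k)"
    using higher_deriv_power[of k 0 m 0] by simp
  then show ?thesis
    unfolding taylor_coeff_def
    by (cases k m rule: linorder_cases) (auto simp: pochhammer_fact[symmetric] pochhammer_0_left)
qed

lemma taylor_coeff_const: "taylor_coeff (\<lambda>_. a) k = (if k = 0 then a else 0)"
  by (simp add: taylor_coeff_def)

lemma taylor_coeff_diff:
  assumes "f holomorphic_on S" "g holomorphic_on S" "open S" "0 \<in> S"
  shows "taylor_coeff (\<lambda>z. f z - g z) k = taylor_coeff f k - taylor_coeff g k"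
  unfolding taylor_coeff_def using higher_deriv_diff[OF assms] by (simp add: diff_divide_distrib)

lemma taylor_coeff_sums:
  assumes "f holomorphic_on ball 0 r" "z \<in> ball 0 r"
  shows "(\<lambda>n. taylor_coeff f n * z ^ n) sums f z"
  using holomorphic_power_series[OF assms] by (simp add: taylor_coeff_def)

lemma tendsto_taylor_coeff_uniform_limit:
  assumes "\<And>n. F n holomorphic_on ball 0 r" and "r > 0"
    and "uniform_limit (ball 0 r) F f sequentially"
  shows "(\<lambda>n. taylor_coeff (F n) k) \<longlonglongrightarrow> taylor_coeff f k"
proof -
  have "(\<lambda>n. (deriv ^^ k) (F n) 0) \<longlonglongrightarrow> (deriv ^^ k) f 0"
    using assms by (intro higher_deriv_complex_uniform_limit always_eventually allI) auto
  then show ?thesis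
    unfolding taylor_coeff_def by (intro tendsto_divide tendsto_const) auto
qed

lemma A2_eq_0_if_taylor_coeff_eq_0:
  assumes "f \<in> A2 \<beta>" and "\<And>k. taylor_coeff f k = 0"
  shows "f = (\<lambda>_. 0)"
proof
  fix z
  show "f z = 0"
  proof (cases "z \<in> ball 0 1")
    case True
    have "f holomorphic_on ball 0 1"
      using assms(1) by (simp add: A2_def)
    from taylor_coeff_sums[OF this True] show ?thesis
      using sums_unique2[OF _ sums_zero] by (simp add: assms(2))
  qed (use assms(1) in \<open>simp add: A2_def\<close>)
qed

definition disc_monomial :: "nat \<Rightarrow> complex \<Rightarrow> complex" where
  "disc_monomial m z = (if z \<in> ball 0 1 then z ^ m else 0)"

lemma taylor_coeff_disc_monomial: "taylor_coeff (disc_monomial m) k = (if k = m then 1 else 0)"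
  using taylor_coeff_cong[of 1 "disc_monomial m" "\<lambda>z. z ^ m"]
  by (simp add: disc_monomial_def taylor_coeff_power)

lemma disc_monomial_in_A2: "disc_monomial m \<in> A2 \<beta>"
proof -
  have "disc_monomial m holomorphic_on ball 0 1"
    by (rule holomorphic_transform[of "\<lambda>z. z ^ m"]) (auto intro: holomorphic_intros simp: disc_monomial_def)
  moreover have "summable (\<lambda>n. bergman_weight \<beta> n * (norm (taylor_coeff (disc_monomial m) n))\<^sup>2)"
    by (rule summable_finite[of "{m}"]) (auto simp: taylor_coeff_disc_monomial)
  ultimately show ?thesis
    by (simp add: A2_def disc_monomial_def)
qed

lemma A2_inner_disc_monomial:
  "A2_inner \<beta> (disc_monomial m) g = bergman_weight \<beta> m * cnj (taylor_coeff g m)"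
proof -
  have "(\<lambda>n. complex_of_real (bergman_weight \<beta> n) * taylor_coeff (disc_monomial m) n * cnj (taylor_coeff g n))
      = (\<lambda>n. if n = m then complex_of_real (bergman_weight \<beta> n) * cnj (taylor_coeff g n) else 0)"
    by (auto simp: taylor_coeff_disc_monomial)
  then show ?thesis
    unfolding A2_inner_def by (simp add: sums_unique[OF sums_single, symmetric])
qed

lemma A2_weighted_taylor_coeff_square_summable:
  assumes \<beta>: "\<beta> > -1" and g: "g \<in> A2 \<beta>"
  shows "summable (\<lambda>k. (norm (of_real (bergman_weight \<beta> k) * taylor_coeff g k))\<^sup>2)"
proof (rule summable_comparison_test')
  show "summable (\<lambda>k. bergman_weight \<beta> k * (norm (taylor_coeff g k))\<^sup>2)"
    using g by (simp add: A2_def)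
  fix k
  have "norm ((norm (of_real (bergman_weight \<beta> k) * taylor_coeff g k))\<^sup>2)
      = bergman_weight \<beta> k * (bergman_weight \<beta> k * (norm (taylor_coeff g k))\<^sup>2)"
    using bergman_weight_pos[OF \<beta>, of k] by (simp add: norm_mult power_mult_distrib power2_eq_square)
  also have "\<dots> \<le> bergman_weight \<beta> k * (norm (taylor_coeff g k))\<^sup>2"
    using bergman_weight_pos[OF \<beta>, of k] bergman_weight_le_1[OF \<beta>, of k]
    by (intro mult_left_le_one_le mult_nonneg_nonneg) auto
  finally show "norm ((norm (of_real (bergman_weight \<beta> k) * taylor_coeff g k))\<^sup>2)
      \<le> bergman_weight \<beta> k * (norm (taylor_coeff g k))\<^sup>2" .
qed

lemma A2_inner_split_constant_term:
  assumes \<beta>: "\<beta> > -1" and coeff: "\<And>k. taylor_coeff f k = c k + (if k = 0 then a else 0)"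
    and summable: "summable (\<lambda>k. c k * cnj (of_real (bergman_weight \<beta> k) * taylor_coeff g k))"
  shows "A2_inner \<beta> f g
    = (\<Sum>k. c k * cnj (of_real (bergman_weight \<beta> k) * taylor_coeff g k)) + a * cnj (taylor_coeff g 0)"
proof -
  let ?v = "\<lambda>k. of_real (bergman_weight \<beta> k) * taylor_coeff g k"
  have "(\<lambda>k. of_real (bergman_weight \<beta> k) * taylor_coeff f k * cnj (taylor_coeff g k))
      = (\<lambda>k. c k * cnj (?v k) + (if k = 0 then a * cnj (taylor_coeff g 0) else 0))"
  proof
    fix k
    show "of_real (bergman_weight \<beta> k) * taylor_coeff f k * cnj (taylor_coeff g k)
        = c k * cnj (?v k) + (if k = 0 then a * cnj (taylor_coeff g 0) else 0)"
      using bergman_weight_0[OF \<beta>] by (cases "k = 0") (simp_all add: coeff ring_distribs mult_ac)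
  qed
  moreover have "(\<lambda>k. c k * cnj (?v k) + (if k = 0 then a * cnj (taylor_coeff g 0) else 0))
      sums ((\<Sum>k. c k * cnj (?v k)) + a * cnj (taylor_coeff g 0))"
    using summable by (intro sums_add summable_sums sums_single)
  ultimately show ?thesis
    unfolding A2_inner_def by (auto dest: sums_unique)
qed

section \<open>The \<open>H\<^sup>2\<close> bound for bounded holomorphic functions\<close>

lemma sum_power_root_unity_products:
  fixes k l N :: nat
  assumes "k < N" "l < N"
  defines "\<zeta> \<equiv> cis (2 * pi / N)"
  shows "(\<Sum>j<N. (\<zeta> ^ k * cnj (\<zeta> ^ l)) ^ j) = (if k = l then of_nat N else 0)"
proof -
  have norm1: "\<zeta> ^ i * cnj (\<zeta> ^ i) = 1" for i
    by (simp add: \<zeta>_def cis_cnj power_mult_distrib[symmetric] cis_mult)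
  show ?thesis
  proof (cases "k = l")
    case False
    define u where "u = \<zeta> ^ k * cnj (\<zeta> ^ l)"
    have pow: "\<zeta> ^ i = exp (2 * of_real pi * \<i> * of_nat i / of_nat N)" for i
      using assms(1) by (simp add: \<zeta>_def cis_conv_exp exp_of_nat_mult[symmetric] mult_ac)
    have "\<zeta> ^ k \<noteq> \<zeta> ^ l"
      using False assms(1,2) unfolding pow by (simp add: complex_root_unity_eq)
    then have "u \<noteq> 1"
      using norm1[of l] by (auto simp: u_def) (metis mult.assoc mult.commute mult_1)
    moreover have "u ^ N = 1"
    proof -
      have "\<zeta> ^ N = 1"
        using pow[of N] assms(1) by simp
      moreover from this have "cnj \<zeta> ^ N = 1"
        by (metis complex_cnj_one complex_cnj_power)
      ultimately show ?thesis
        by (simp add: u_def power_mult_distrib power_mult[symmetric] mult.commute[of _ N])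
          (simp add: power_mult)
    qed
    ultimately show ?thesis
      using False geometric_sum[of u N] by (simp add: u_def)
  qed (use norm1 in simp)
qed

lemma discrete_Parseval:
  fixes a :: "nat \<Rightarrow> complex" and N :: nat
  defines "\<zeta> \<equiv> cis (2 * pi / N)"
  shows "(\<Sum>j<N. (norm (\<Sum>k<N. a k * (\<zeta> ^ j) ^ k))\<^sup>2) = real N * (\<Sum>k<N. (norm (a k))\<^sup>2)"
proof -
  have expand: "a k * (\<zeta> ^ j) ^ k * cnj (a l * (\<zeta> ^ j) ^ l) = a k * cnj (a l) * (\<zeta> ^ k * cnj (\<zeta> ^ l)) ^ j"
    for j k l :: nat
    by (simp add: power_mult[symmetric] mult.commute[of j] power_mult_distrib)
  have "complex_of_real (\<Sum>j<N. (norm (\<Sum>k<N. a k * (\<zeta> ^ j) ^ k))\<^sup>2)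
      = (\<Sum>j<N. (\<Sum>k<N. a k * (\<zeta> ^ j) ^ k) * cnj (\<Sum>l<N. a l * (\<zeta> ^ j) ^ l))"
    by (simp only: of_real_sum complex_norm_square)
  also have "\<dots> = (\<Sum>j<N. \<Sum>k<N. \<Sum>l<N. a k * cnj (a l) * (\<zeta> ^ k * cnj (\<zeta> ^ l)) ^ j)"
    by (simp only: cnj_sum sum_product expand)
  also have "\<dots> = (\<Sum>k<N. \<Sum>l<N. \<Sum>j<N. a k * cnj (a l) * (\<zeta> ^ k * cnj (\<zeta> ^ l)) ^ j)"
    by (subst sum.swap) (rule sum.cong[OF refl], rule sum.swap)
  also have "\<dots> = (\<Sum>k<N. \<Sum>l<N. a k * cnj (a l) * (if k = l then of_nat N else 0))"
    by (intro sum.cong refl)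
      (simp only: sum_distrib_left[symmetric] \<zeta>_def sum_power_root_unity_products lessThan_iff)
  also have "\<dots> = (\<Sum>k<N. a k * cnj (a k) * of_nat N)"
    by (simp add: if_distrib cong: if_cong)
  also have "\<dots> = complex_of_real (real N * (\<Sum>k<N. (norm (a k))\<^sup>2))"
    by (simp add: complex_norm_square sum_distrib_left mult.commute flip: of_real_power)
  finally show ?thesis
    by (simp only: of_real_eq_iff)
qed

lemma norm_taylor_coeff_le:
  assumes hol: "f holomorphic_on ball 0 1" and bound: "\<And>z. z \<in> ball 0 1 \<Longrightarrow> norm (f z) \<le> M"
  shows "norm (taylor_coeff f k) \<le> M"
proof (rule tendsto_lowerbound)
  have "((\<lambda>\<rho>::real. M / \<rho> ^ k) \<longlongrightarrow> M / 1 ^ k) (at_left 1)"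
    by (intro tendsto_intros) auto
  then show "((\<lambda>\<rho>::real. M / \<rho> ^ k) \<longlongrightarrow> M) (at_left 1)"
    by simp
  have "eventually (\<lambda>\<rho>. \<rho> \<in> {0<..<1}) (at_left (1::real))"
    by (rule eventually_at_left_real) simp
  then show "eventually (\<lambda>\<rho>. norm (taylor_coeff f k) \<le> M / \<rho> ^ k) (at_left 1)"
  proof (rule eventually_mono)
    fix \<rho> :: real
    assume \<rho>: "\<rho> \<in> {0<..<1}"
    then have hol_\<rho>: "f holomorphic_on cball 0 \<rho>"
      by (intro holomorphic_on_subset[OF hol]) auto
    have "norm ((deriv ^^ k) f 0) \<le> fact k * M / \<rho> ^ k"
    proof (rule Cauchy_inequality)
      show "f holomorphic_on ball 0 \<rho>"
        using hol_\<rho> by (rule holomorphic_on_subset) auto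
      show "continuous_on (cball 0 \<rho>) f"
        using hol_\<rho> by (rule holomorphic_on_imp_continuous_on)
      show "norm (f z) \<le> M" if "norm (0 - z) = \<rho>" for z
        using that \<rho> bound by auto
    qed (use \<rho> in auto)
    then show "norm (taylor_coeff f k) \<le> M / \<rho> ^ k"
      by (simp add: taylor_coeff_def norm_divide field_simps)
  qed
qed simp

lemma norm_taylor_partial_sum_le:
  assumes hol: "f holomorphic_on ball 0 1" and bound: "\<And>z. z \<in> ball 0 1 \<Longrightarrow> norm (f z) \<le> M"
    and x: "norm x < 1"
  shows "norm (\<Sum>k<N. taylor_coeff f k * x ^ k) \<le> M + M * norm x ^ N / (1 - norm x)"
proof -
  define r where "r = norm x"
  have r: "0 \<le> r" "r < 1"
    using x by (auto simp: r_def)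
  have sums: "(\<lambda>k. taylor_coeff f k * x ^ k) sums f x"
    using x by (intro taylor_coeff_sums[OF hol]) simp
  have term_le: "norm (taylor_coeff f (i + N) * x ^ (i + N)) \<le> M * r ^ N * r ^ i" for i
  proof -
    have "norm (taylor_coeff f (i + N) * x ^ (i + N)) = norm (taylor_coeff f (i + N)) * (r ^ N * r ^ i)"
      by (simp add: norm_mult norm_power r_def power_add mult.commute)
    also have "\<dots> \<le> M * (r ^ N * r ^ i)"
      using r by (intro mult_right_mono norm_taylor_coeff_le[OF hol bound] mult_nonneg_nonneg zero_le_power)
    finally show ?thesis
      by (simp only: mult.assoc)
  qed
  have geom: "(\<lambda>i. M * r ^ N * r ^ i) sums (M * r ^ N / (1 - r))"
    using sums_mult[OF geometric_sums, of r "M * r ^ N"] r by simp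
  have tail: "norm (\<Sum>i. taylor_coeff f (i + N) * x ^ (i + N)) \<le> M * r ^ N / (1 - r)"
    using norm_suminf_le[OF term_le sums_summable[OF geom]] sums_unique[OF geom] by simp
  have "(\<Sum>k<N. taylor_coeff f k * x ^ k) = f x - (\<Sum>i. taylor_coeff f (i + N) * x ^ (i + N))"
    using suminf_split_initial_segment[OF sums_summable[OF sums], of N] sums_unique[OF sums] by simp
  then have "norm (\<Sum>k<N. taylor_coeff f k * x ^ k)
      \<le> norm (f x) + norm (\<Sum>i. taylor_coeff f (i + N) * x ^ (i + N))"
    by (simp only: norm_triangle_ineq4)
  also have "\<dots> \<le> M + M * r ^ N / (1 - r)"
    using x bound tail by (intro add_mono) auto
  finally show ?thesis
    by (simp only: r_def)
qed

text \<open>Parseval's identity on the circle of radius \<open>r\<close> is replaced by its discrete version at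
  \<open>r\<close> times the \<open>N\<close>-th roots of unity, applied to the \<open>N\<close>-th partial sum of the Taylor series;
  the truncation error vanishes as \<open>N \<rightarrow> \<infinity>\<close>.\<close>

lemma sum_norm_taylor_coeff_radius_le_truncated:
  assumes hol: "f holomorphic_on ball 0 1" and bound: "\<And>z. z \<in> ball 0 1 \<Longrightarrow> norm (f z) \<le> M"
    and r: "0 < r" "r < 1" and N: "N > 0"
  shows "(\<Sum>k<N. (norm (taylor_coeff f k) * r ^ k)\<^sup>2) \<le> (M + M * r ^ N / (1 - r))\<^sup>2"
proof -
  define \<zeta> where "\<zeta> = cis (2 * pi / N)"
  define c where "c k = taylor_coeff f k * of_real (r ^ k)" for k
  have "real N * (\<Sum>k<N. (norm (c k))\<^sup>2) = (\<Sum>j<N. (norm (\<Sum>k<N. c k * (\<zeta> ^ j) ^ k))\<^sup>2)"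
    unfolding \<zeta>_def by (rule discrete_Parseval[symmetric])
  also have "\<dots> \<le> (\<Sum>j<N. (M + M * r ^ N / (1 - r))\<^sup>2)"
  proof (rule sum_mono)
    fix j
    have "(\<Sum>k<N. c k * (\<zeta> ^ j) ^ k) = (\<Sum>k<N. taylor_coeff f k * (of_real r * \<zeta> ^ j) ^ k)"
      by (simp add: c_def power_mult_distrib mult.assoc)
    moreover have "norm (of_real r * \<zeta> ^ j) = r"
      using r by (simp add: \<zeta>_def norm_mult norm_power)
    ultimately show "(norm (\<Sum>k<N. c k * (\<zeta> ^ j) ^ k))\<^sup>2 \<le> (M + M * r ^ N / (1 - r))\<^sup>2"
      using norm_taylor_partial_sum_le[OF hol bound, of "of_real r * \<zeta> ^ j" N] r
      by (simp add: power_mono)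
  qed
  also have "\<dots> = real N * (M + M * r ^ N / (1 - r))\<^sup>2"
    by simp
  finally show ?thesis
    using N r by (simp add: c_def norm_mult norm_power)
qed

lemma sum_norm_taylor_coeff_radius_le:
  assumes hol: "f holomorphic_on ball 0 1" and bound: "\<And>z. z \<in> ball 0 1 \<Longrightarrow> norm (f z) \<le> M"
    and r: "0 < r" "r < 1"
  shows "(\<Sum>k<K. (norm (taylor_coeff f k) * r ^ k)\<^sup>2) \<le> M\<^sup>2"
proof (rule tendsto_lowerbound)
  have "(\<lambda>N. (M + M * r ^ N / (1 - r))\<^sup>2) \<longlonglongrightarrow> (M + M * 0 / (1 - r))\<^sup>2"
    using r by (intro tendsto_intros LIMSEQ_power_zero) auto
  then show "(\<lambda>N. (M + M * r ^ N / (1 - r))\<^sup>2) \<longlonglongrightarrow> M\<^sup>2"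
    by simp
  show "eventually (\<lambda>N. (\<Sum>k<K. (norm (taylor_coeff f k) * r ^ k)\<^sup>2) \<le> (M + M * r ^ N / (1 - r))\<^sup>2) sequentially"
    unfolding eventually_sequentially
  proof (intro exI allI impI)
    fix N
    assume N: "Suc K \<le> N"
    then have "0 < N"
      by simp
    from N have "(\<Sum>k<K. (norm (taylor_coeff f k) * r ^ k)\<^sup>2) \<le> (\<Sum>k<N. (norm (taylor_coeff f k) * r ^ k)\<^sup>2)"
      by (intro sum_mono2) auto
    also have "\<dots> \<le> (M + M * r ^ N / (1 - r))\<^sup>2"
      by (rule sum_norm_taylor_coeff_radius_le_truncated[OF hol bound r \<open>0 < N\<close>])
    finally show "(\<Sum>k<K. (norm (taylor_coeff f k) * r ^ k)\<^sup>2) \<le> (M + M * r ^ N / (1 - r))\<^sup>2" .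
  qed
qed simp

lemma sum_norm_taylor_coeff_le:
  assumes hol: "f holomorphic_on ball 0 1" and bound: "\<And>z. z \<in> ball 0 1 \<Longrightarrow> norm (f z) \<le> M"
  shows "(\<Sum>k<K. (norm (taylor_coeff f k))\<^sup>2) \<le> M\<^sup>2"
proof (rule tendsto_upperbound)
  have "((\<lambda>r. \<Sum>k<K. (norm (taylor_coeff f k) * r ^ k)\<^sup>2) \<longlongrightarrow> (\<Sum>k<K. (norm (taylor_coeff f k) * 1 ^ k)\<^sup>2)) (at_left 1)"
    by (intro tendsto_intros)
  then show "((\<lambda>r. \<Sum>k<K. (norm (taylor_coeff f k) * r ^ k)\<^sup>2) \<longlongrightarrow> (\<Sum>k<K. (norm (taylor_coeff f k))\<^sup>2)) (at_left 1)"
    by simp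
  show "eventually (\<lambda>r. (\<Sum>k<K. (norm (taylor_coeff f k) * r ^ k)\<^sup>2) \<le> M\<^sup>2) (at_left (1::real))"
    using eventually_at_left_real[of 0 1]
    by (auto elim!: eventually_mono intro: sum_norm_taylor_coeff_radius_le[OF hol bound])
qed simp

section \<open>Weak convergence in \<open>l\<^sup>2\<close>\<close>

lemma Cauchy_Schwarz_suminf_mult_cnj:
  fixes c v :: "nat \<Rightarrow> complex"
  assumes v: "summable (\<lambda>k. (norm (v k))\<^sup>2)" and c: "\<And>N. (\<Sum>k<N. (norm (c k))\<^sup>2) \<le> B"
  shows "summable (\<lambda>k. c k * cnj (v k))"
    and "norm (\<Sum>k. c k * cnj (v k)) \<le> sqrt (B * (\<Sum>k. (norm (v k))\<^sup>2))"
proof -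
  have partial: "(\<Sum>k<N. norm (c k * cnj (v k))) \<le> sqrt (B * (\<Sum>k. (norm (v k))\<^sup>2))" for N
  proof -
    have "(\<Sum>k<N. norm (c k) * norm (v k))\<^sup>2 \<le> (\<Sum>k<N. (norm (c k))\<^sup>2) * (\<Sum>k<N. (norm (v k))\<^sup>2)"
      by (rule Cauchy_Schwarz_ineq_sum)
    also have "\<dots> \<le> B * (\<Sum>k. (norm (v k))\<^sup>2)"
      using c[of 0] by (intro mult_mono c sum_le_suminf v) (auto intro: sum_nonneg)
    finally show ?thesis
      by (simp add: norm_mult real_le_rsqrt)
  qed
  have abs_summable: "summable (\<lambda>k. norm (c k * cnj (v k)))"
    by (rule summableI_nonneg_bounded[OF _ partial]) simp
  then show "summable (\<lambda>k. c k * cnj (v k))"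
    by (rule summable_norm_cancel)
  have "norm (\<Sum>k. c k * cnj (v k)) \<le> (\<Sum>k. norm (c k * cnj (v k)))"
    by (rule summable_norm[OF abs_summable])
  also have "\<dots> \<le> sqrt (B * (\<Sum>k. (norm (v k))\<^sup>2))"
    by (rule suminf_le_const[OF abs_summable partial])
  finally show "norm (\<Sum>k. c k * cnj (v k)) \<le> sqrt (B * (\<Sum>k. (norm (v k))\<^sup>2))" .
qed

lemma sum_shift_le_sum:
  fixes f :: "nat \<Rightarrow> 'a::ordered_comm_monoid_add"
  assumes "\<And>k. 0 \<le> f k"
  shows "(\<Sum>i<N. f (i + K)) \<le> (\<Sum>k<N + K. f k)"
proof -
  have "(\<Sum>i<N. f (i + K)) = sum f {K..<N + K}"
    using sum.shift_bounds_nat_ivl[of f 0 K N] by (simp add: atLeast0LessThan)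
  also have "\<dots> \<le> (\<Sum>k<N + K. f k)"
    using assms by (intro sum_mono2) auto
  finally show ?thesis .
qed

lemma tendsto_suminf_mult_cnj_zero:
  fixes c :: "nat \<Rightarrow> nat \<Rightarrow> complex" and v :: "nat \<Rightarrow> complex"
  assumes v: "summable (\<lambda>k. (norm (v k))\<^sup>2)"
    and bound: "\<And>n N. (\<Sum>k<N. (norm (c n k))\<^sup>2) \<le> B"
    and null: "\<And>k. (\<lambda>n. c n k) \<longlonglongrightarrow> 0"
  shows "(\<lambda>n. \<Sum>k. c n k * cnj (v k)) \<longlonglongrightarrow> 0"
proof (rule tendstoI)
  fix e :: real
  assume "e > 0"
  define tail where "tail K = sqrt (B * (\<Sum>i. (norm (v (i + K)))\<^sup>2))" for K
  have "tail \<longlonglongrightarrow> sqrt (B * 0)"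
    unfolding tail_def by (intro tendsto_intros suminf_exist_split2 v)
  then have "eventually (\<lambda>K. tail K < e / 2) sequentially"
    using order_tendstoD(2)[of tail "sqrt (B * 0)" sequentially "e / 2"] \<open>e > 0\<close> by simp
  then obtain K where K: "tail K < e / 2"
    by (auto simp: eventually_sequentially)
  have "(\<lambda>n. \<Sum>k<K. c n k * cnj (v k)) \<longlonglongrightarrow> 0"
    by (intro tendsto_null_sum tendsto_mult_left_zero null)
  then have "eventually (\<lambda>n. norm (\<Sum>k<K. c n k * cnj (v k)) < e / 2) sequentially"
    using \<open>e > 0\<close> by (auto dest!: tendstoD[of _ 0 _ "e / 2"] simp: dist_norm)
  then show "eventually (\<lambda>n. dist (\<Sum>k. c n k * cnj (v k)) 0 < e) sequentially"
  proof (rule eventually_mono)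
    fix n
    assume head: "norm (\<Sum>k<K. c n k * cnj (v k)) < e / 2"
    have tail_bound: "(\<Sum>i<N. (norm (c n (i + K)))\<^sup>2) \<le> B" for N
      using sum_shift_le_sum[where f = "\<lambda>k. (norm (c n k))\<^sup>2" and N = N and K = K] bound[of n "N + K"] by simp
    note shifted = Cauchy_Schwarz_suminf_mult_cnj[OF summable_ignore_initial_segment[OF v, of K] tail_bound]
    have "summable (\<lambda>k. c n k * cnj (v k))"
      using shifted(1) summable_iff_shift[of "\<lambda>k. c n k * cnj (v k)" K] by simp
    then have "(\<Sum>k. c n k * cnj (v k)) = (\<Sum>i. c n (i + K) * cnj (v (i + K))) + (\<Sum>k<K. c n k * cnj (v k))"
      by (rule suminf_split_initial_segment)
    then have "norm (\<Sum>k. c n k * cnj (v k))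
        \<le> norm (\<Sum>i. c n (i + K) * cnj (v (i + K))) + norm (\<Sum>k<K. c n k * cnj (v k))"
      by (simp only: norm_triangle_ineq)
    then show "dist (\<Sum>k. c n k * cnj (v k)) 0 < e"
      using shifted(2) head K unfolding tail_def by simp
  qed
qed

lemma funpow_image_subset: "f ` S \<subseteq> S \<Longrightarrow> (f ^^ n) ` S \<subseteq> S"
  by (induction n) (auto simp: image_subset_iff)

lemma holomorphic_on_funpow:
  assumes "f holomorphic_on S" "f ` S \<subseteq> S"
  shows "(f ^^ n) holomorphic_on S"
proof (induction n)
  case (Suc n)
  then show ?case
    using holomorphic_on_compose_gen[OF Suc assms(1) funpow_image_subset[OF assms(2)]] by (simp add: o_def)
qed (simp add: holomorphic_on_ident[unfolded id_def])

lemma funpow_comp_op_disc_monomial: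
  assumes "\<phi> ` ball 0 1 \<subseteq> ball 0 1"
  shows "(comp_op \<phi> ^^ n) (disc_monomial m) = (\<lambda>z. if z \<in> ball 0 1 then ((\<phi> ^^ n) z) ^ m else 0)"
proof (induction n)
  case (Suc n)
  show ?case
  proof
    fix z
    have "(\<phi> ^^ Suc n) z = (\<phi> ^^ n) (\<phi> z)"
      by (simp only: funpow_Suc_right o_apply)
    then show "(comp_op \<phi> ^^ Suc n) (disc_monomial m) z = (if z \<in> ball 0 1 then ((\<phi> ^^ Suc n) z) ^ m else 0)"
      using assms by (auto simp: Suc comp_op_def image_subset_iff)
  qed
qed (simp add: disc_monomial_def fun_eq_iff)

lemma comp_op_disc_monomial_0:
  assumes "\<phi> ` ball 0 1 \<subseteq> ball 0 1"
  shows "comp_op \<phi> (disc_monomial 0) = disc_monomial 0"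
  using assms by (auto simp: comp_op_def disc_monomial_def fun_eq_iff image_subset_iff)

lemma funpow_in_A2: "is_adjoint \<beta> T T' \<Longrightarrow> f \<in> A2 \<beta> \<Longrightarrow> (T ^^ n) f \<in> A2 \<beta>"
  by (induction n) (auto simp: is_adjoint_def)

lemma A2_inner_funpow_adjoint_fixed:
  assumes adj: "is_adjoint \<beta> T T'" and g: "g \<in> A2 \<beta>" "T' g = g" and f: "f \<in> A2 \<beta>"
  shows "A2_inner \<beta> ((T ^^ n) f) g = A2_inner \<beta> f g"
proof (induction n)
  case (Suc n)
  have "A2_inner \<beta> (T ((T ^^ n) f)) g = A2_inner \<beta> ((T ^^ n) f) (T' g)"
    using adj funpow_in_A2[OF adj f] g by (simp add: is_adjoint_def)
  then show ?case
    using Suc g by simp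
qed simp

lemma uniform_limit_funpow_power:
  fixes \<phi> :: "complex \<Rightarrow> complex"
  assumes self: "\<phi> ` ball 0 1 \<subseteq> ball 0 1"
    and unif: "\<forall>K. compact K \<and> K \<subseteq> ball 0 1 \<longrightarrow> uniform_limit K (\<lambda>n. \<phi> ^^ n) (\<lambda>_. \<omega>) sequentially"
  shows "uniform_limit (ball 0 (1/2)) (\<lambda>n z. ((\<phi> ^^ n) z) ^ m - \<omega> ^ m) (\<lambda>_. 0) sequentially"
proof -
  have "uniform_limit (ball 0 (1/2)) (\<lambda>n z. ((\<phi> ^^ n) z) ^ m) (\<lambda>_. \<omega> ^ m) sequentially"
  proof (rule uniform_limit_compose_uniformly_continuous_on[where f = "\<lambda>z. z ^ m" and B = "cball 0 1"])
    have "compact (cball (0::complex) (1/2))" "cball (0::complex) (1/2) \<subseteq> ball 0 1"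
      by auto
    then have "uniform_limit (cball 0 (1/2)) (\<lambda>n. \<phi> ^^ n) (\<lambda>_. \<omega>) sequentially"
      using unif by blast
    then show "uniform_limit (ball 0 (1/2)) (\<lambda>n. \<phi> ^^ n) (\<lambda>_. \<omega>) sequentially"
      by (rule uniform_limit_on_subset) auto
    show "uniformly_continuous_on (cball 0 1) (\<lambda>z::complex. z ^ m)"
      by (intro compact_uniformly_continuous continuous_intros) auto
    show "\<forall>\<^sub>F n in sequentially. \<forall>z\<in>ball 0 (1/2). (\<phi> ^^ n) z \<in> cball 0 1"
    proof (intro always_eventually allI ballI)
      fix n and z :: complex
      assume "z \<in> ball 0 (1/2)"
      then have "z \<in> ball 0 1"
        by simp
      then show "(\<phi> ^^ n) z \<in> cball 0 1"
        using funpow_image_subset[OF self, of n] ball_subset_cball by blast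
    qed
  qed simp
  then have "uniform_limit (ball 0 (1/2)) (\<lambda>n z. ((\<phi> ^^ n) z) ^ m - \<omega> ^ m) (\<lambda>z. \<omega> ^ m - \<omega> ^ m) sequentially"
    by (intro uniform_limit_minus uniform_limit_const)
  then show ?thesis
    by simp
qed

lemma tendsto_A2_inner_funpow_comp_op_disc_monomial:
  fixes \<phi> :: "complex \<Rightarrow> complex"
  assumes \<beta>: "\<beta> > -1" and hol: "\<phi> holomorphic_on ball 0 1" and self: "\<phi> ` ball 0 1 \<subseteq> ball 0 1"
    and \<omega>: "norm \<omega> \<le> 1"
    and unif: "\<forall>K. compact K \<and> K \<subseteq> ball 0 1 \<longrightarrow> uniform_limit K (\<lambda>n. \<phi> ^^ n) (\<lambda>_. \<omega>) sequentially"
    and g: "g \<in> A2 \<beta>"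
  shows "(\<lambda>n. A2_inner \<beta> ((comp_op \<phi> ^^ n) (disc_monomial m)) g) \<longlonglongrightarrow> \<omega> ^ m * cnj (taylor_coeff g 0)"
proof -
  define H where "H = (\<lambda>n z. ((\<phi> ^^ n) z) ^ m - \<omega> ^ m)"
  define v where "v k = of_real (bergman_weight \<beta> k) * taylor_coeff g k" for k
  have hol_power: "(\<lambda>z. ((\<phi> ^^ n) z) ^ m) holomorphic_on ball 0 1" for n
    using holomorphic_on_funpow[OF hol self] by (intro holomorphic_intros)
  then have holH: "H n holomorphic_on ball 0 1" for n
    unfolding H_def by (intro holomorphic_on_diff holomorphic_on_const)
  have H_le: "norm (H n z) \<le> 2" if "z \<in> ball 0 1" for n z
  proof -
    have "norm ((\<phi> ^^ n) z) \<le> 1"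
      using funpow_image_subset[OF self, of n] that by force
    then have "norm (((\<phi> ^^ n) z) ^ m) \<le> 1" "norm (\<omega> ^ m) \<le> 1"
      using \<omega> by (simp_all add: norm_power power_le_one)
    then show ?thesis
      using norm_triangle_ineq4[of "((\<phi> ^^ n) z) ^ m" "\<omega> ^ m"] by (simp add: H_def)
  qed
  have "(\<lambda>n. taylor_coeff (H n) k) \<longlonglongrightarrow> taylor_coeff (\<lambda>_. 0) k" for k
  proof (rule tendsto_taylor_coeff_uniform_limit)
    show "H n holomorphic_on ball 0 (1/2)" for n
      using holH by (rule holomorphic_on_subset) auto
    show "uniform_limit (ball 0 (1/2)) H (\<lambda>_. 0) sequentially"
      unfolding H_def by (rule uniform_limit_funpow_power[OF self unif])
  qed simp
  then have null: "(\<lambda>n. taylor_coeff (H n) k) \<longlonglongrightarrow> 0" for k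
    by (simp add: taylor_coeff_const)
  have bound: "(\<Sum>k<N. (norm (taylor_coeff (H n) k))\<^sup>2) \<le> 2\<^sup>2" for n N
    by (rule sum_norm_taylor_coeff_le[OF holH H_le])
  have v: "summable (\<lambda>k. (norm (v k))\<^sup>2)"
    unfolding v_def by (rule A2_weighted_taylor_coeff_square_summable[OF \<beta> g])
  have "A2_inner \<beta> ((comp_op \<phi> ^^ n) (disc_monomial m)) g
      = (\<Sum>k. taylor_coeff (H n) k * cnj (v k)) + \<omega> ^ m * cnj (taylor_coeff g 0)" for n
    unfolding v_def
  proof (rule A2_inner_split_constant_term[OF \<beta>])
    fix k
    have "taylor_coeff ((comp_op \<phi> ^^ n) (disc_monomial m)) k = taylor_coeff (\<lambda>z. ((\<phi> ^^ n) z) ^ m) k"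
      unfolding funpow_comp_op_disc_monomial[OF self] by (rule taylor_coeff_cong) auto
    also have "\<dots> = taylor_coeff (H n) k + (if k = 0 then \<omega> ^ m else 0)"
      using taylor_coeff_diff[OF hol_power[of n] holomorphic_on_const[of "\<omega> ^ m" "ball 0 1"] open_ball, of k]
      by (simp add: H_def taylor_coeff_const)
    finally show "taylor_coeff ((comp_op \<phi> ^^ n) (disc_monomial m)) k
        = taylor_coeff (H n) k + (if k = 0 then \<omega> ^ m else 0)" .
    show "summable (\<lambda>k. taylor_coeff (H n) k * cnj (of_real (bergman_weight \<beta> k) * taylor_coeff g k))"
      using Cauchy_Schwarz_suminf_mult_cnj(1)[OF v bound] by (simp add: v_def)
  qed
  then show ?thesis
    using tendsto_add[OF tendsto_suminf_mult_cnj_zero[OF v bound null] tendsto_const] by simp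
qed

lemma A2_boundary_kernel_eq_0:
  assumes \<beta>: "\<beta> > -1" and g: "g \<in> A2 \<beta>" and \<omega>: "norm \<omega> = 1"
    and kernel: "\<And>m. bergman_weight \<beta> m * cnj (taylor_coeff g m) = \<omega> ^ m * cnj (taylor_coeff g 0)"
  shows "g = (\<lambda>_. 0)"
proof (rule A2_eq_0_if_taylor_coeff_eq_0[OF g])
  have lower: "(norm (taylor_coeff g 0))\<^sup>2 \<le> bergman_weight \<beta> m * (norm (taylor_coeff g m))\<^sup>2" for m
  proof -
    have norm_eq: "bergman_weight \<beta> m * norm (taylor_coeff g m) = norm (taylor_coeff g 0)"
      using arg_cong[OF kernel[of m], of norm] bergman_weight_pos[OF \<beta>, of m] \<omega>
      by (simp add: norm_mult norm_power)
    have "(norm (taylor_coeff g 0))\<^sup>2 = bergman_weight \<beta> m * (bergman_weight \<beta> m * (norm (taylor_coeff g m))\<^sup>2)"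
      unfolding norm_eq[symmetric] by (simp add: power2_eq_square)
    also have "\<dots> \<le> bergman_weight \<beta> m * (norm (taylor_coeff g m))\<^sup>2"
      using bergman_weight_pos[OF \<beta>, of m] bergman_weight_le_1[OF \<beta>, of m]
      by (intro mult_left_le_one_le mult_nonneg_nonneg) auto
    finally show ?thesis .
  qed
  have "(\<lambda>m. bergman_weight \<beta> m * (norm (taylor_coeff g m))\<^sup>2) \<longlonglongrightarrow> 0"
    using g by (intro summable_LIMSEQ_zero) (simp add: A2_def)
  then have "(norm (taylor_coeff g 0))\<^sup>2 \<le> 0"
    using lower by (intro tendsto_lowerbound always_eventually) auto
  then have "taylor_coeff g 0 = 0"
    by simp
  then show "taylor_coeff g m = 0" for m
    using kernel[of m] bergman_weight_pos[OF \<beta>, of m] by simp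
qed

lemma adjoint_comp_op_fixed_point_eq_0:
  fixes \<phi> :: "complex \<Rightarrow> complex"
  assumes \<beta>: "\<beta> > -1" and hol: "\<phi> holomorphic_on ball 0 1" and self: "\<phi> ` ball 0 1 \<subseteq> ball 0 1"
    and \<omega>: "norm \<omega> = 1"
    and unif: "\<forall>K. compact K \<and> K \<subseteq> ball 0 1 \<longrightarrow> uniform_limit K (\<lambda>n. \<phi> ^^ n) (\<lambda>_. \<omega>) sequentially"
    and adj: "is_adjoint \<beta> (comp_op \<phi>) T'" and g: "g \<in> A2 \<beta>" "T' g = g"
  shows "g = (\<lambda>_. 0)"
proof (rule A2_boundary_kernel_eq_0[OF \<beta> g(1) \<omega>])
  fix m
  have "(\<lambda>n. A2_inner \<beta> ((comp_op \<phi> ^^ n) (disc_monomial m)) g) \<longlonglongrightarrow> \<omega> ^ m * cnj (taylor_coeff g 0)"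
    using \<omega> by (intro tendsto_A2_inner_funpow_comp_op_disc_monomial[OF \<beta> hol self _ unif g(1)]) simp
  moreover have "A2_inner \<beta> ((comp_op \<phi> ^^ n) (disc_monomial m)) g = bergman_weight \<beta> m * cnj (taylor_coeff g m)" for n
    using A2_inner_funpow_adjoint_fixed[OF adj g disc_monomial_in_A2] by (simp add: A2_inner_disc_monomial)
  ultimately show "bergman_weight \<beta> m * cnj (taylor_coeff g m) = \<omega> ^ m * cnj (taylor_coeff g 0)"
    using LIMSEQ_const_iff by force
qed

lemma hyperbolic_lf_boundary_attractor:
  assumes "hyperbolic_lf \<phi>"
  obtains \<omega> where "\<phi> holomorphic_on ball 0 1" "\<phi> ` ball 0 1 \<subseteq> ball 0 1" "norm \<omega> = 1"
    "\<forall>K. compact K \<and> K \<subseteq> ball 0 1 \<longrightarrow> uniform_limit K (\<lambda>n. \<phi> ^^ n) (\<lambda>_. \<omega>) sequentially"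
proof -
  obtain a b c d \<omega> where lf: "lf_selfmap_coeffs \<phi> a b c d" and "norm \<omega> = 1"
    and "\<forall>K. compact K \<and> K \<subseteq> ball 0 1 \<longrightarrow> uniform_limit K (\<lambda>n. \<phi> ^^ n) (\<lambda>_. \<omega>) sequentially"
    using assms unfolding hyperbolic_lf_def by blast
  moreover have "\<phi> holomorphic_on ball 0 1"
  proof -
    have "\<phi> = (\<lambda>z. (a * z + b) / (c * z + d))"
      using lf by (auto simp: lf_selfmap_coeffs_def)
    then show ?thesis
      using lf by (auto simp: lf_selfmap_coeffs_def intro!: holomorphic_intros)
  qed
  moreover have "\<phi> ` ball 0 1 \<subseteq> ball 0 1"
    using lf unfolding lf_selfmap_coeffs_def by blast
  ultimately show ?thesis
    using that by blast
qed

lemma conjugation_eq_0_iff: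
  assumes "is_conjugation \<beta> C" "f \<in> A2 \<beta>"
  shows "C f = (\<lambda>_. 0) \<longleftrightarrow> f = (\<lambda>_. 0)"
proof -
  have scale: "C (\<lambda>z. a * f z) = (\<lambda>z. cnj a * C f z)" for a
    using assms unfolding is_conjugation_def by blast
  have "C (C f) = f"
    using assms unfolding is_conjugation_def by blast
  moreover have "C (\<lambda>_. 0) = (\<lambda>_. 0)"
    using scale[of 0] by simp
  ultimately show ?thesis
    by auto
qed

lemma complex_symmetric_adjoint_fixed_point:
  assumes "complex_symmetric \<beta> T" and f: "f \<in> A2 \<beta>" "f \<noteq> (\<lambda>_. 0)" "T f = f"
  obtains T' g where "is_adjoint \<beta> T T'" "g \<in> A2 \<beta>" "g \<noteq> (\<lambda>_. 0)" "T' g = g"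
proof -
  obtain C T' where C: "is_conjugation \<beta> C" and adj: "is_adjoint \<beta> T T'"
    and intertwine: "\<forall>f\<in>A2 \<beta>. C (T f) = T' (C f)"
    using assms(1) unfolding complex_symmetric_def by blast
  have "C f \<in> A2 \<beta>"
    using C f(1) unfolding is_conjugation_def by blast
  moreover have "C f \<noteq> (\<lambda>_. 0)"
    using conjugation_eq_0_iff[OF C f(1)] f(2) by blast
  moreover have "T' (C f) = C f"
    using intertwine f(1,3) by metis
  ultimately show ?thesis
    using that adj by blast
qed

theorem theorem4p3:
  fixes \<beta> :: real and \<phi> :: "complex \<Rightarrow> complex"
  assumes "\<beta> > -1"
    and "hyperbolic_lf \<phi>"
  shows "\<not> complex_symmetric \<beta> (comp_op \<phi>)"
proof
  assume symmetric: "complex_symmetric \<beta> (comp_op \<phi>)"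
  obtain \<omega> where hol: "\<phi> holomorphic_on ball 0 1" and self: "\<phi> ` ball 0 1 \<subseteq> ball 0 1"
    and \<omega>: "norm \<omega> = 1"
    and unif: "\<forall>K. compact K \<and> K \<subseteq> ball 0 1 \<longrightarrow> uniform_limit K (\<lambda>n. \<phi> ^^ n) (\<lambda>_. \<omega>) sequentially"
    using hyperbolic_lf_boundary_attractor[OF assms(2)] .
  have "disc_monomial 0 \<noteq> (\<lambda>_. 0)"
    by (metis disc_monomial_def centre_in_ball zero_less_one power_0 one_neq_zero)
  then obtain T' g where adj: "is_adjoint \<beta> (comp_op \<phi>) T'"
    and g: "g \<in> A2 \<beta>" "g \<noteq> (\<lambda>_. 0)" "T' g = g"
    using complex_symmetric_adjoint_fixed_point[OF symmetric disc_monomial_in_A2]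
      comp_op_disc_monomial_0[OF self] by metis
  then show False
    using adjoint_comp_op_fixed_point_eq_0[OF assms(1) hol self \<omega> unif adj g(1,3)] by blast
qed

end
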